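(* Let $X$ be a space and consider: (1) $\mathsf{EC}(X,\mathbb{R})$ holds; (2) $\mathsf{EC}(X,Y)$ holds for every metric space $Y$; (3a) $X$ satisfies $\mathsf{I0}$; (3b) the intersection of any two non-Lindelöf $0$-sets of $X$ is non-Lindelöf; (4a) $X$ satisfies $\mathsf{IC}$; (4b) the intersection of any two closed non-Lindelöf subsets of $X$ is non-Lindelöf. Then (1)$\Leftrightarrow$(2)$\Leftrightarrow$(3a)$\Leftarrow$(3b)$\Leftarrow$(4a)$\Leftrightarrow$(4b). Moreover, if $X$ is Tychonoff then (3a)$\Leftrightarrow$(3b), and if $X$ is normal then all six properties are equivalent.
   Context: All spaces are Hausdorff and maps continuous. For a non-Lindelöf space $X$ and a space $Y$, $\mathsf{EC}(X,Y)$ means: for every continuous $f:X\to Y$ there is a Lindelöf $Z\subset X$ such that $f(X\setminus Z)$ is a singleton (for Lindelöf $X$ the property is regarded as trivially true). A $0$-set of $X$ is a set $g^{-1}(\{0\})$ for some continuous $g:X\to[0,1]$. $X$ satisfies $\mathsf{IC}$ (resp. $\mathsf{I0}$) if of any two disjoint closed subsets (resp. $0$-sets) of $X$ at least one is Lindelöf. *)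

theory Defs
  imports "HOL-Analysis.Analysis"
begin

definition Lindelof_subset :: "'a topology \<Rightarrow> 'a set \<Rightarrow> bool" where
  "Lindelof_subset X Z \<longleftrightarrow> Z \<subseteq> topspace X \<and> Lindelof_space (subtopology X Z)"

definition EC :: "'a topology \<Rightarrow> 'b topology \<Rightarrow> bool" where
  "EC X Y \<longleftrightarrow> (Lindelof_space X \<or>
     (\<forall>f. continuous_map X Y f \<longrightarrow>
        (\<exists>Z. Lindelof_subset X Z \<and> (\<exists>y. f ` (topspace X - Z) = {y}))))"

definition zero_set :: "'a topology \<Rightarrow> 'a set \<Rightarrow> bool" where
  "zero_set X S \<longleftrightarrow> (\<exists>g. continuous_map X (subtopology euclideanreal {0..1}) g \<and>
                           S = {x \<in> topspace X. g x = 0})"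

definition IC :: "'a topology \<Rightarrow> bool" where
  "IC X \<longleftrightarrow> (\<forall>A B. closedin X A \<and> closedin X B \<and> A \<inter> B = {} \<longrightarrow>
                 Lindelof_subset X A \<or> Lindelof_subset X B)"

definition I0 :: "'a topology \<Rightarrow> bool" where
  "I0 X \<longleftrightarrow> (\<forall>A B. zero_set X A \<and> zero_set X B \<and> A \<inter> B = {} \<longrightarrow>
                 Lindelof_subset X A \<or> Lindelof_subset X B)"

definition zero_sets_meet :: "'a topology \<Rightarrow> bool" where
  "zero_sets_meet X \<longleftrightarrow> (\<forall>A B. zero_set X A \<and> zero_set X B \<and>
       \<not> Lindelof_subset X A \<and> \<not> Lindelof_subset X B \<longrightarrow> \<not> Lindelof_subset X (A \<inter> B))"

definition closed_sets_meet :: "'a topology \<Rightarrow> bool" where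
  "closed_sets_meet X \<longleftrightarrow> (\<forall>A B. closedin X A \<and> closedin X B \<and>
       \<not> Lindelof_subset X A \<and> \<not> Lindelof_subset X B \<longrightarrow> \<not> Lindelof_subset X (A \<inter> B))"

end

theory Submission
  imports Defs
begin

text \<open>
  Given \<open>I0\<close>, a real map \<open>f\<close> is constant off a Lindelof set at the value
  \<open>sup {a. {f \<le> a} Lindelof}\<close>, because for \<open>a < b\<close> the sets \<open>{f \<le> a}\<close> and \<open>{f \<ge> b}\<close> are
  disjoint zero sets. Conversely, under \<open>EC(X,\<real>)\<close> a real function vanishing exactly on a
  non-Lindelof zero set vanishes off a Lindelof set; two such zero sets therefore meet in a
  non-Lindelof set.

  For a metric target, \<open>I0\<close> makes every \<open>r\<close>-separated subset of \<open>f(X)\<close> countable, since two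
  disjoint uncountable halves would give disjoint non-Lindelof zero sets of the distance
  functions to them. Hence a maximal \<open>r\<close>-separated subset \<open>D\<close> of \<open>f(X)\<close> is countable; each
  \<open>x \<mapsto> d(f x, p)\<close> with \<open>p \<in> D\<close> is constant off a Lindelof set, and a point outside all these
  sets shows that \<open>f\<close> stays \<open>r\<close>-close to some \<open>p\<close> off a Lindelof set. Letting \<open>r = 1/(n+1)\<close>
  makes \<open>f\<close> constant off a Lindelof set.

  \<open>IC\<close> implies its intersection form: if closed non-Lindelof sets \<open>A\<close>, \<open>B\<close> had a Lindelof
  intersection, a countable part of a cover of \<open>A\<close> without countable subcover gives an open
  \<open>U \<supseteq> A \<inter> B\<close> with \<open>A - U\<close> non-Lindelof, similarly \<open>V\<close> for \<open>B\<close>, and \<open>A - U\<close>, \<open>B - V\<close>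
  are disjoint. In normal spaces Urysohn's lemma puts disjoint closed sets inside disjoint
  zero sets.
\<close>

lemma Lindelof_subset_empty [simp]: "Lindelof_subset X {}"
  by (simp add: Lindelof_subset_def Lindelof_space_topspace_empty)

lemma Lindelof_subset_iff_cover:
  "Lindelof_subset X Z \<longleftrightarrow> Z \<subseteq> topspace X \<and>
     (\<forall>\<U>. (\<forall>U\<in>\<U>. openin X U) \<and> Z \<subseteq> \<Union>\<U> \<longrightarrow> (\<exists>\<V>. countable \<V> \<and> \<V> \<subseteq> \<U> \<and> Z \<subseteq> \<Union>\<V>))"
  by (auto simp: Lindelof_subset_def Lindelof_space_subtopology_subset)

lemma Lindelof_subset_countable_subcover:
  assumes "Lindelof_subset X Z" "\<forall>U\<in>\<U>. openin X U" "Z \<subseteq> \<Union>\<U>"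
  shows "\<exists>\<V>. countable \<V> \<and> \<V> \<subseteq> \<U> \<and> Z \<subseteq> \<Union>\<V>"
  using assms unfolding Lindelof_subset_iff_cover by blast

lemma Lindelof_subset_closedin_subset:
  assumes "Lindelof_subset X A" "closedin X C" "C \<subseteq> A"
  shows "Lindelof_subset X C"
proof -
  have "closedin (subtopology X A) C"
    by (metis assms(2,3) closedin_subset_topspace)
  then have "Lindelof_space (subtopology (subtopology X A) C)"
    using assms(1) Lindelof_space_closedin_subtopology unfolding Lindelof_subset_def by blast
  then show ?thesis
    using assms by (simp add: Lindelof_subset_def subtopology_subtopology inf.absorb2 closedin_subset)
qed

lemma Lindelof_subset_closedin: "Lindelof_space X \<Longrightarrow> closedin X C \<Longrightarrow> Lindelof_subset X C"
  by (metis Lindelof_subset_closedin_subset Lindelof_subset_def closedin_subset subtopology_topspace order_refl)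

lemma Lindelof_subset_UN:
  assumes "countable I" "\<And>i. i \<in> I \<Longrightarrow> Lindelof_subset X (Z i)"
  shows "Lindelof_subset X (\<Union>i\<in>I. Z i)"
  using assms Lindelof_space_Union[of "Z ` I" X] unfolding Lindelof_subset_def by auto

lemma Lindelof_subset_Un:
  "Lindelof_subset X A \<Longrightarrow> Lindelof_subset X B \<Longrightarrow> Lindelof_subset X (A \<union> B)"
  using Lindelof_space_Union[of "{A, B}" X] unfolding Lindelof_subset_def by auto

lemma Lindelof_space_if_covered:
  "Lindelof_subset X Z \<Longrightarrow> topspace X \<subseteq> Z \<Longrightarrow> Lindelof_space X"
  by (metis Lindelof_subset_def subset_antisym subtopology_topspace)

definition constant_off_Lindelof :: "'a topology \<Rightarrow> ('a \<Rightarrow> 'b) \<Rightarrow> 'b \<Rightarrow> bool" where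
  "constant_off_Lindelof X f y \<longleftrightarrow> (\<exists>Z. Lindelof_subset X Z \<and> (\<forall>x \<in> topspace X - Z. f x = y))"

lemma EC_iff_constant_off_Lindelof:
  assumes "\<not> Lindelof_space X"
  shows "EC X Y \<longleftrightarrow> (\<forall>f. continuous_map X Y f \<longrightarrow> (\<exists>y. constant_off_Lindelof X f y))"
proof -
  have "f ` (topspace X - Z) = {y} \<longleftrightarrow> (\<forall>x \<in> topspace X - Z. f x = y)"
    if "Lindelof_subset X Z" for f :: "'a \<Rightarrow> 'b" and Z y
  proof -
    have "topspace X - Z \<noteq> {}"
      using Lindelof_space_if_covered[OF that] assms by blast
    then show ?thesis by auto
  qed
  then have "(\<exists>Z. Lindelof_subset X Z \<and> (\<exists>y. f ` (topspace X - Z) = {y})) \<longleftrightarrow>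
      (\<exists>y. constant_off_Lindelof X f y)" for f :: "'a \<Rightarrow> 'b"
    unfolding constant_off_Lindelof_def by blast
  then show ?thesis
    using assms unfolding EC_def by simp
qed

lemma constant_off_Lindelof_value_in_image:
  assumes "constant_off_Lindelof X f y" "closedin X A" "\<not> Lindelof_subset X A"
  shows "y \<in> f ` A"
proof -
  obtain Z where Z: "Lindelof_subset X Z" "\<forall>x \<in> topspace X - Z. f x = y"
    using assms(1) unfolding constant_off_Lindelof_def by blast
  have "\<not> A \<subseteq> Z"
    using Lindelof_subset_closedin_subset[OF Z(1) assms(2)] assms(3) by blast
  then obtain x where "x \<in> A" "x \<notin> Z" by blast
  then show ?thesis
    using Z(2) closedin_subset[OF assms(2)] by force
qed

lemma zero_set_iff_continuous_real:
  "zero_set X A \<longleftrightarrow> (\<exists>g. continuous_map X euclideanreal g \<and> A = {x \<in> topspace X. g x = 0})"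
proof
  assume "zero_set X A"
  then show "\<exists>g. continuous_map X euclideanreal g \<and> A = {x \<in> topspace X. g x = 0}"
    unfolding zero_set_def continuous_map_in_subtopology by blast
next
  assume "\<exists>g. continuous_map X euclideanreal g \<and> A = {x \<in> topspace X. g x = 0}"
  then obtain g where g: "continuous_map X euclideanreal g" "A = {x \<in> topspace X. g x = 0}"
    by blast
  have "continuous_map X (subtopology euclideanreal {0..1}) (\<lambda>x. min 1 \<bar>g x\<bar>)"
    using g(1) by (auto simp: continuous_map_in_subtopology intro!: continuous_intros)
  moreover have "A = {x \<in> topspace X. min 1 \<bar>g x\<bar> = 0}"
    using g(2) by auto
  ultimately show "zero_set X A"
    unfolding zero_set_def by blast
qed

lemma zero_set_continuous_real:
  "continuous_map X euclideanreal g \<Longrightarrow> zero_set X {x \<in> topspace X. g x = 0}"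
  unfolding zero_set_iff_continuous_real by blast

lemma zero_set_closedin: "zero_set X A \<Longrightarrow> closedin X A"
  unfolding zero_set_iff_continuous_real
  using closedin_continuous_map_preimage[of X euclideanreal _ "{0}"] by auto

lemma EC_real_zero_set_co_Lindelof:
  assumes EC: "EC X euclideanreal" and C: "zero_set X C" "\<not> Lindelof_subset X C"
  obtains Z where "Lindelof_subset X Z" "topspace X - Z \<subseteq> C"
proof -
  have nL: "\<not> Lindelof_space X"
    using C Lindelof_subset_closedin zero_set_closedin by blast
  obtain g where g: "continuous_map X euclideanreal g" "C = {x \<in> topspace X. g x = 0}"
    using C(1) unfolding zero_set_iff_continuous_real by blast
  obtain c where c: "constant_off_Lindelof X g c"
    using EC g(1) EC_iff_constant_off_Lindelof[OF nL] by blast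
  have "c \<in> g ` C"
    by (rule constant_off_Lindelof_value_in_image[OF c zero_set_closedin[OF C(1)] C(2)])
  then have "c = 0"
    using g(2) by auto
  then show ?thesis
    using that c g(2) unfolding constant_off_Lindelof_def by auto
qed

lemma EC_real_imp_zero_sets_meet:
  assumes EC: "EC X euclideanreal"
  shows "zero_sets_meet X"
  unfolding zero_sets_meet_def
proof (intro allI impI notI)
  fix A B
  assume AB: "zero_set X A \<and> zero_set X B \<and> \<not> Lindelof_subset X A \<and> \<not> Lindelof_subset X B"
    and AB_Lindelof: "Lindelof_subset X (A \<inter> B)"
  obtain ZA ZB where "Lindelof_subset X ZA" "topspace X - ZA \<subseteq> A"
    and "Lindelof_subset X ZB" "topspace X - ZB \<subseteq> B"
    using EC_real_zero_set_co_Lindelof[OF EC] AB by metis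
  then have "Lindelof_subset X (ZA \<union> ZB \<union> A \<inter> B)" "topspace X \<subseteq> ZA \<union> ZB \<union> A \<inter> B"
    using AB_Lindelof Lindelof_subset_Un by blast+
  moreover have "\<not> Lindelof_space X"
    using AB Lindelof_subset_closedin zero_set_closedin by blast
  ultimately show False
    using Lindelof_space_if_covered by blast
qed

lemma zero_sets_meet_imp_I0: "zero_sets_meet X \<Longrightarrow> I0 X"
  unfolding zero_sets_meet_def I0_def by (metis Lindelof_subset_empty)

lemma I0_sublevel_or_superlevel_Lindelof:
  assumes I0: "I0 X" and f: "continuous_map X euclideanreal f" and "a < b"
  shows "Lindelof_subset X {x \<in> topspace X. f x \<le> a} \<or> Lindelof_subset X {x \<in> topspace X. b \<le> f x}"
proof -
  have "continuous_map X euclideanreal (\<lambda>x. max 0 (f x - a))"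
    "continuous_map X euclideanreal (\<lambda>x. max 0 (b - f x))"
    using f by (auto intro!: continuous_intros)
  moreover have "{x \<in> topspace X. f x \<le> a} = {x \<in> topspace X. max 0 (f x - a) = 0}"
    "{x \<in> topspace X. b \<le> f x} = {x \<in> topspace X. max 0 (b - f x) = 0}"
    by (auto simp: max_def)
  ultimately have "zero_set X {x \<in> topspace X. f x \<le> a}" "zero_set X {x \<in> topspace X. b \<le> f x}"
    using zero_set_continuous_real by metis+
  then show ?thesis
    using I0 \<open>a < b\<close> unfolding I0_def by fastforce
qed

lemma I0_Lindelof_threshold:
  assumes I0: "I0 X" and nL: "\<not> Lindelof_space X" and f: "continuous_map X euclideanreal f"
  obtains y where "\<And>a. a < y \<Longrightarrow> Lindelof_subset X {x \<in> topspace X. f x \<le> a}"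
    "\<And>b. y < b \<Longrightarrow> Lindelof_subset X {x \<in> topspace X. b \<le> f x}"
proof -
  define L where "L a \<longleftrightarrow> Lindelof_subset X {x \<in> topspace X. f x \<le> a}" for a
  define R where "R b \<longleftrightarrow> Lindelof_subset X {x \<in> topspace X. b \<le> f x}" for b
  have L_mono: "L a'" if "L a" "a' \<le> a" for a a'
    using Lindelof_subset_closedin_subset[of X "{x \<in> topspace X. f x \<le> a}"]
      closedin_continuous_map_preimage[OF f, of "{..a'}"] that unfolding L_def by force
  have LR: "L a \<or> R b" if "a < b" for a b
    using I0_sublevel_or_superlevel_Lindelof[OF I0 f that] unfolding L_def R_def .
  have not_cover: "\<exists>n. \<not> Lindelof_subset X (S n)" if "topspace X \<subseteq> (\<Union>n::nat. S n)" for S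
    using Lindelof_subset_UN[of UNIV X S] Lindelof_space_if_covered[OF _ that] nL by auto
  have "topspace X \<subseteq> (\<Union>n. {x \<in> topspace X. f x \<le> real n})"
    using real_arch_simple by fastforce
  from not_cover[OF this] obtain N :: nat where N: "\<not> L (real N)"
    unfolding L_def by blast
  have "topspace X \<subseteq> (\<Union>n. {x \<in> topspace X. - real n \<le> f x})"
    using real_arch_simple by (fastforce simp: minus_le_iff)
  from not_cover[OF this] obtain M :: nat where "\<not> R (- real M)"
    unfolding R_def by blast
  then have "L (- real M - 1)"
    using LR[of "- real M - 1" "- real M"] by simp
  moreover have bdd: "bdd_above (Collect L)"
    using L_mono N by (metis bdd_aboveI mem_Collect_eq nle_le)
  ultimately have below: "L a" if "a < Sup (Collect L)" for a
    using that L_mono less_cSup_iff[of "Collect L"] by (metis empty_iff less_le mem_Collect_eq)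
  have above: "R b" if "Sup (Collect L) < b" for b
  proof -
    have "\<not> L ((Sup (Collect L) + b) / 2)"
      using cSup_upper[OF _ bdd] that by fastforce
    then show ?thesis
      using LR[of "(Sup (Collect L) + b) / 2" b] that by auto
  qed
  show ?thesis
    by (rule that) (use below above in \<open>simp_all add: L_def R_def\<close>)
qed

lemma I0_imp_EC_real:
  assumes I0: "I0 X"
  shows "EC X euclideanreal"
proof (cases "Lindelof_space X")
  case True
  then show ?thesis by (simp add: EC_def)
next
  case False
  show ?thesis
    unfolding EC_iff_constant_off_Lindelof[OF False]
  proof (intro allI impI)
    fix f assume f: "continuous_map X euclideanreal f"
    obtain y where
      below: "\<And>a. a < y \<Longrightarrow> Lindelof_subset X {x \<in> topspace X. f x \<le> a}" and
      above: "\<And>b. y < b \<Longrightarrow> Lindelof_subset X {x \<in> topspace X. b \<le> f x}"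
      using I0_Lindelof_threshold[OF I0 False f] by blast
    define Z where "Z = (\<Union>n. {x \<in> topspace X. f x \<le> y - inverse (Suc n)} \<union>
                          {x \<in> topspace X. y + inverse (Suc n) \<le> f x})"
    have "Lindelof_subset X Z"
      unfolding Z_def
    proof (intro Lindelof_subset_UN Lindelof_subset_Un)
      fix n :: nat
      show "Lindelof_subset X {x \<in> topspace X. f x \<le> y - inverse (Suc n)}"
        by (rule below) simp
      show "Lindelof_subset X {x \<in> topspace X. y + inverse (Suc n) \<le> f x}"
        by (rule above) simp
    qed simp
    moreover have "f x = y" if "x \<in> topspace X - Z" for x
    proof (rule ccontr)
      assume "f x \<noteq> y"
      then obtain n where "inverse (Suc n) < \<bar>f x - y\<bar>"
        using reals_Archimedean by (metis zero_less_abs_iff right_minus_eq)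
      then have "f x \<le> y - inverse (Suc n) \<or> y + inverse (Suc n) \<le> f x"
        by (auto simp: abs_if split: if_splits)
      then show False
        using that unfolding Z_def by blast
    qed
    ultimately show "\<exists>y. constant_off_Lindelof X f y"
      unfolding constant_off_Lindelof_def by blast
  qed
qed

lemma I0_iff_zero_sets_meet: "I0 X \<longleftrightarrow> zero_sets_meet X"
  using I0_imp_EC_real EC_real_imp_zero_sets_meet zero_sets_meet_imp_I0 by blast

lemma EC_real_iff_I0: "EC X euclideanreal \<longleftrightarrow> I0 X"
  using I0_imp_EC_real EC_real_imp_zero_sets_meet zero_sets_meet_imp_I0 by blast

lemma not_Lindelof_subset_diff_open:
  assumes "A \<subseteq> topspace X" "\<not> Lindelof_subset X A" "Lindelof_subset X C" "C \<subseteq> A"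
  obtains U where "openin X U" "C \<subseteq> U" "\<not> Lindelof_subset X (A - U)"
proof -
  obtain \<U> where \<U>: "\<forall>U\<in>\<U>. openin X U" "A \<subseteq> \<Union>\<U>"
    and no_subcover: "\<And>\<V>. countable \<V> \<Longrightarrow> \<V> \<subseteq> \<U> \<Longrightarrow> \<not> A \<subseteq> \<Union>\<V>"
    using assms(1,2) unfolding Lindelof_subset_iff_cover by auto
  obtain \<V> where \<V>: "countable \<V>" "\<V> \<subseteq> \<U>" "C \<subseteq> \<Union>\<V>"
    using Lindelof_subset_countable_subcover[OF assms(3) \<U>(1)] assms(4) \<U>(2) by blast
  have "\<not> Lindelof_subset X (A - \<Union>\<V>)"
  proof
    assume L: "Lindelof_subset X (A - \<Union>\<V>)"
    have "A - \<Union>\<V> \<subseteq> \<Union>\<U>"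
      using \<U>(2) by blast
    then obtain \<V>' where \<V>': "countable \<V>'" "\<V>' \<subseteq> \<U>" "A - \<Union>\<V> \<subseteq> \<Union>\<V>'"
      using Lindelof_subset_countable_subcover[OF L \<U>(1)] by blast
    have "A \<subseteq> \<Union>(\<V> \<union> \<V>')"
      using \<V>'(3) by blast
    then show False
      using no_subcover[of "\<V> \<union> \<V>'"] \<V> \<V>' by simp
  qed
  moreover have "openin X (\<Union>\<V>)"
    using \<U>(1) \<V>(2) by (intro openin_Union) blast
  ultimately show ?thesis
    using that \<V>(3) by blast
qed

lemma IC_iff_closed_sets_meet: "IC X \<longleftrightarrow> closed_sets_meet X"
proof
  assume IC: "IC X"
  show "closed_sets_meet X"
    unfolding closed_sets_meet_def
  proof (intro allI impI notI)
    fix A B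
    assume AB: "closedin X A \<and> closedin X B \<and> \<not> Lindelof_subset X A \<and> \<not> Lindelof_subset X B"
      and AB_Lindelof: "Lindelof_subset X (A \<inter> B)"
    obtain U where U: "openin X U" "A \<inter> B \<subseteq> U" "\<not> Lindelof_subset X (A - U)"
      using not_Lindelof_subset_diff_open[OF _ _ AB_Lindelof] AB closedin_subset
      by (metis inf.cobounded1)
    obtain V where V: "openin X V" "A \<inter> B \<subseteq> V" "\<not> Lindelof_subset X (B - V)"
      using not_Lindelof_subset_diff_open[OF _ _ AB_Lindelof] AB closedin_subset
      by (metis inf.cobounded2)
    have "closedin X (A - U)" "closedin X (B - V)" "(A - U) \<inter> (B - V) = {}"
      using AB U V by (auto intro: closedin_diff)
    then show False
      using IC U(3) V(3) unfolding IC_def by blast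
  qed
next
  assume "closed_sets_meet X"
  then show "IC X"
    unfolding closed_sets_meet_def IC_def by (metis Lindelof_subset_empty)
qed

lemma IC_imp_I0: "IC X \<Longrightarrow> I0 X"
  unfolding IC_def I0_def using zero_set_closedin by blast

lemma normal_I0_imp_IC:
  assumes normal: "normal_space X" and I0: "I0 X"
  shows "IC X"
  unfolding IC_def
proof (intro allI impI)
  fix A B
  assume "closedin X A \<and> closedin X B \<and> A \<inter> B = {}"
  then have A: "closedin X A" and B: "closedin X B" and disj: "disjnt A B"
    by (auto simp: disjnt_def)
  obtain g where g: "continuous_map X euclideanreal g" "g ` A \<subseteq> {0}" "g ` B \<subseteq> {1}"
    by (rule Urysohn_lemma_alt[OF normal A B disj])
  define A' where "A' = {x \<in> topspace X. g x = 0}"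
  define B' where "B' = {x \<in> topspace X. g x - 1 = 0}"
  have "continuous_map X euclideanreal (\<lambda>x. g x - 1)"
    using g(1) by (auto intro!: continuous_intros)
  then have "zero_set X A'" "zero_set X B'"
    unfolding A'_def B'_def using g(1) zero_set_continuous_real by blast+
  moreover have "A' \<inter> B' = {}"
    unfolding A'_def B'_def by auto
  ultimately have "Lindelof_subset X A' \<or> Lindelof_subset X B'"
    using I0 unfolding I0_def by blast
  moreover have "A \<subseteq> A'" "B \<subseteq> B'"
    using g(2,3) closedin_subset[OF A] closedin_subset[OF B] unfolding A'_def B'_def by auto
  ultimately show "Lindelof_subset X A \<or> Lindelof_subset X B"
    using Lindelof_subset_closedin_subset A B by blast
qed

lemma split_uncountable:
  assumes "uncountable D"
  obtains D1 D2 where "D1 \<subseteq> D" "D2 \<subseteq> D" "D1 \<inter> D2 = {}" "uncountable D1" "uncountable D2"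
proof -
  obtain g where "bij_betw g (D <+> D) D"
    using card_of_ordIso card_of_Plus_infinite1[OF uncountable_infinite[OF assms] card_of_mono1[OF subset_refl]]
    by blast
  then have inj: "inj_on g (D <+> D)" and img: "g ` (D <+> D) = D"
    by (auto simp: bij_betw_def)
  have "inj_on (g \<circ> Inl) D" "inj_on (g \<circ> Inr) D"
    using inj by (auto simp: inj_on_def)
  then have "uncountable ((g \<circ> Inl) ` D)" "uncountable ((g \<circ> Inr) ` D)"
    using assms countable_image_inj_on by blast+
  moreover have "(g \<circ> Inl) ` D \<inter> (g \<circ> Inr) ` D = {}"
    using inj by (auto dest: inj_onD)
  moreover have "(g \<circ> Inl) ` D \<subseteq> D" "(g \<circ> Inr) ` D \<subseteq> D"
    using img by auto
  ultimately show ?thesis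
    using that by blast
qed

definition mseparated :: "'b metric \<Rightarrow> real \<Rightarrow> 'b set \<Rightarrow> bool" where
  "mseparated m r D \<longleftrightarrow> D \<subseteq> mspace m \<and> (\<forall>a\<in>D. \<forall>b\<in>D. a \<noteq> b \<longrightarrow> r \<le> mdist m a b)"

lemma mseparated_eq_if_close:
  assumes "mseparated m r D" "a \<in> D" "b \<in> D" "y \<in> mspace m"
    "mdist m a y < r / 2" "mdist m b y < r / 2"
  shows "a = b"
proof (rule ccontr)
  assume "a \<noteq> b"
  then have "r \<le> mdist m a b"
    using assms(1-3) unfolding mseparated_def by blast
  moreover have "a \<in> mspace m" "b \<in> mspace m"
    using assms(1-3) unfolding mseparated_def by auto
  then have "mdist m a b \<le> mdist m a y + mdist m b y"
    using assms(4) mdist_triangle[of a m y b] mdist_commute[of m y b] by linarith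
  ultimately show False
    using assms(5,6) by linarith
qed

lemma maximal_mseparated_subset:
  assumes "S \<subseteq> mspace m" "0 < r"
  obtains D where "D \<subseteq> S" "mseparated m r D" "\<And>y. y \<in> S \<Longrightarrow> \<exists>d\<in>D. mdist m y d < r"
proof -
  define \<A> where "\<A> = {D. D \<subseteq> S \<and> mseparated m r D}"
  have "\<Union>\<C> \<in> \<A>" if \<C>: "\<C> \<in> chains \<A>" for \<C>
  proof -
    have "r \<le> mdist m a b" if "a \<in> D" "b \<in> D'" "D \<in> \<C>" "D' \<in> \<C>" "a \<noteq> b" for a b D D'
    proof -
      have "D \<subseteq> D' \<or> D' \<subseteq> D"
        using chainsD[OF \<C>] that(3,4) by blast
      moreover have "mseparated m r D" "mseparated m r D'"
        using chainsD2[OF \<C>] that(3,4) unfolding \<A>_def by blast+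
      ultimately show ?thesis
        using that(1,2,5) unfolding mseparated_def by blast
    qed
    moreover have "\<Union>\<C> \<subseteq> S"
      using chainsD2[OF \<C>] unfolding \<A>_def by blast
    ultimately show ?thesis
      using assms(1) unfolding \<A>_def mseparated_def by blast
  qed
  then obtain D where D: "D \<in> \<A>" and maximal: "\<And>D'. D' \<in> \<A> \<Longrightarrow> D \<subseteq> D' \<Longrightarrow> D' = D"
    using Zorn_Lemma[of \<A>] by blast
  have "\<exists>d\<in>D. mdist m y d < r" if y: "y \<in> S" for y
  proof (rule ccontr)
    assume far: "\<not> (\<exists>d\<in>D. mdist m y d < r)"
    have "mdist m y y = 0"
      using y assms(1) by auto
    then have "y \<notin> D"
      using far \<open>0 < r\<close> by force
    moreover have "insert y D \<in> \<A>"
      using D far y assms(1) unfolding \<A>_def mseparated_def by (auto simp: mdist_commute not_less)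
    ultimately show False
      using maximal[of "insert y D"] by blast
  qed
  then show ?thesis
    using that D unfolding \<A>_def by blast
qed

lemma Lindelof_subset_countable_net:
  assumes f: "continuous_map X (mtopology_of m) f" and Z: "Lindelof_subset X Z" and "0 < e"
  obtains C where "countable C" "C \<subseteq> Z" "\<And>z. z \<in> Z \<Longrightarrow> \<exists>c\<in>C. mdist m (f z) (f c) < e"
proof -
  have Z_sub: "Z \<subseteq> topspace X"
    using Z unfolding Lindelof_subset_def by blast
  have f_in: "f x \<in> mspace m" if "x \<in> topspace X" for x
    using f that by (simp add: continuous_map_def Pi_iff)
  define B where "B z = {x \<in> topspace X. mdist m (f x) (f z) < e}" for z
  have "openin X (B z)" if "z \<in> topspace X" for z
  proof -
    have "continuous_map X euclideanreal (\<lambda>x. mdist m (f x) (f z))"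
      using f f_in[OF that] by (intro continuous_map_mdist) simp_all
    then show ?thesis
      unfolding B_def using openin_continuous_map_preimage[of X euclideanreal _ "{..<e}"] by simp
  qed
  moreover have "Z \<subseteq> \<Union>(B ` Z)"
  proof
    fix z assume "z \<in> Z"
    then have "z \<in> topspace X" "mdist m (f z) (f z) = 0"
      using Z_sub f_in by auto
    then have "z \<in> B z"
      using \<open>0 < e\<close> unfolding B_def by simp
    then show "z \<in> \<Union>(B ` Z)"
      using \<open>z \<in> Z\<close> by blast
  qed
  ultimately obtain \<V> where "countable \<V>" "\<V> \<subseteq> B ` Z" "Z \<subseteq> \<Union>\<V>"
    using Lindelof_subset_countable_subcover[OF Z, of "B ` Z"] Z_sub by blast
  moreover from this(1,2) obtain C where C: "countable C" "C \<subseteq> Z" "\<V> = B ` C"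
    using countable_subset_image[of \<V> B Z] by blast
  ultimately have cover: "Z \<subseteq> (\<Union>c\<in>C. B c)"
    by blast
  show ?thesis
    by (rule that[OF C(1,2)]) (use cover in \<open>auto simp: B_def\<close>)
qed

lemma countable_mseparated_Int_image:
  assumes f: "continuous_map X (mtopology_of m) f" and Z: "Lindelof_subset X Z"
    and "0 < r" and D: "mseparated m r D"
  shows "countable (D \<inter> f ` Z)"
proof -
  obtain C where C: "countable C" "C \<subseteq> Z" and net: "\<And>z. z \<in> Z \<Longrightarrow> \<exists>c\<in>C. mdist m (f z) (f c) < r / 2"
    using Lindelof_subset_countable_net[OF f Z, of "r / 2"] \<open>0 < r\<close> by auto
  define E where "E c = {d \<in> D. mdist m d (f c) < r / 2}" for c
  have "D \<inter> f ` Z \<subseteq> (\<Union>c\<in>C. E c)"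
  proof
    fix d assume "d \<in> D \<inter> f ` Z"
    then obtain z where "d \<in> D" "z \<in> Z" "d = f z"
      by blast
    moreover from net[OF this(2)] obtain c where "c \<in> C" "mdist m (f z) (f c) < r / 2"
      by blast
    ultimately show "d \<in> (\<Union>c\<in>C. E c)"
      unfolding E_def by blast
  qed
  moreover have "countable (E c)" if "c \<in> C" for c
  proof (cases "E c = {}")
    case False
    then obtain a where a: "a \<in> E c"
      by blast
    have "f c \<in> mspace m"
      using that C(2) Z continuous_map_image_subset_topspace[OF f]
      unfolding Lindelof_subset_def by auto
    then have "E c \<subseteq> {a}"
      using mseparated_eq_if_close[OF D] a unfolding E_def by blast
    then show ?thesis
      by (rule countable_subset) simp
  qed simp
  ultimately show ?thesis
    using countable_UN[OF C(1)] countable_subset by blast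
qed

definition mdist_set :: "'b metric \<Rightarrow> 'b set \<Rightarrow> 'b \<Rightarrow> real" where
  "mdist_set m S y = Inf (mdist m y ` S)"

lemma mdist_set_le: "d \<in> S \<Longrightarrow> mdist_set m S y \<le> mdist m y d"
  unfolding mdist_set_def by (rule cInf_lower) (auto intro: bdd_belowI[of _ 0])

lemma mdist_set_nonneg: "S \<noteq> {} \<Longrightarrow> 0 \<le> mdist_set m S y"
  unfolding mdist_set_def by (rule cInf_greatest) auto

lemma mdist_set_eq_0:
  assumes "d \<in> S" "d \<in> mspace m"
  shows "mdist_set m S d = 0"
proof -
  have "mdist m d d = 0"
    using assms(2) by simp
  then show ?thesis
    using mdist_set_le[OF assms(1), of m d] mdist_set_nonneg[of S m d] assms(1) by auto
qed

lemma mdist_set_lessD: "S \<noteq> {} \<Longrightarrow> mdist_set m S y < e \<Longrightarrow> \<exists>d\<in>S. mdist m y d < e"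
  unfolding mdist_set_def using cInf_lessD[of "mdist m y ` S" e] by auto

lemma mdist_set_le_add_mdist:
  assumes "S \<subseteq> mspace m" "S \<noteq> {}" "y \<in> mspace m" "y' \<in> mspace m"
  shows "mdist_set m S y \<le> mdist_set m S y' + mdist m y y'"
proof -
  have "mdist_set m S y - mdist m y y' \<le> mdist_set m S y'"
    unfolding mdist_set_def[of m S y']
  proof (rule cInf_greatest)
    fix t assume "t \<in> mdist m y' ` S"
    then obtain d where d: "d \<in> S" "t = mdist m y' d"
      by blast
    have "mdist_set m S y \<le> mdist m y d"
      by (rule mdist_set_le[OF d(1)])
    also have "\<dots> \<le> mdist m y y' + mdist m y' d"
      using assms d(1) by (intro mdist_triangle) auto
    finally show "mdist_set m S y - mdist m y y' \<le> t"
      using d(2) by simp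
  qed (use assms in simp)
  then show ?thesis
    by simp
qed

lemma continuous_map_mdist_set:
  assumes "S \<subseteq> mspace m" "S \<noteq> {}"
  shows "continuous_map (mtopology_of m) euclideanreal (mdist_set m S)"
proof -
  have "Lipschitz_continuous_map m euclidean_metric (mdist_set m S)"
    unfolding Lipschitz_continuous_map_def
  proof (intro conjI exI ballI)
    fix y y' assume "y \<in> mspace m" "y' \<in> mspace m"
    then have "mdist_set m S y \<le> mdist_set m S y' + mdist m y y'"
      "mdist_set m S y' \<le> mdist_set m S y + mdist m y y'"
      using mdist_set_le_add_mdist[OF assms] mdist_commute[of m y y'] by metis+
    then show "mdist euclidean_metric (mdist_set m S y) (mdist_set m S y') \<le> 1 * mdist m y y'"
      by (simp add: dist_real_def abs_le_iff)
  qed simp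
  then show ?thesis
    using Lipschitz_continuous_imp_continuous_map by fastforce
qed

lemma mdist_set_mseparated_disjoint:
  assumes D: "mseparated m r D" and "0 < r" and D12: "D1 \<subseteq> D" "D2 \<subseteq> D" "D1 \<inter> D2 = {}"
    and "D1 \<noteq> {}" "D2 \<noteq> {}" "y \<in> mspace m"
  shows "\<not> (mdist_set m D1 y = 0 \<and> mdist_set m D2 y = 0)"
proof
  assume "mdist_set m D1 y = 0 \<and> mdist_set m D2 y = 0"
  then obtain d1 d2 where "d1 \<in> D1" "mdist m y d1 < r / 2" "d2 \<in> D2" "mdist m y d2 < r / 2"
    using mdist_set_lessD[of _ m y "r / 2"] assms(2,6,7) by (metis half_gt_zero)
  then have "d1 = d2"
    using mseparated_eq_if_close[OF D, of d1 d2 y] D12(1,2) assms(8) by (auto simp: mdist_commute)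
  then show False
    using D12(3) \<open>d1 \<in> D1\<close> \<open>d2 \<in> D2\<close> by blast
qed

lemma I0_mseparated_countable:
  assumes I0: "I0 X" and f: "continuous_map X (mtopology_of m) f" and "0 < r"
    and D: "mseparated m r D" "D \<subseteq> f ` topspace X"
  shows "countable D"
proof (rule ccontr)
  assume "uncountable D"
  then obtain D1 D2 where D12: "D1 \<subseteq> D" "D2 \<subseteq> D" "D1 \<inter> D2 = {}" "uncountable D1" "uncountable D2"
    by (rule split_uncountable)
  have ne: "D1 \<noteq> {}" "D2 \<noteq> {}"
    using D12(4,5) by auto
  have D_sub: "D \<subseteq> mspace m"
    using D(1) unfolding mseparated_def by blast
  have f_in: "f x \<in> mspace m" if "x \<in> topspace X" for x
    using f that by (simp add: continuous_map_def Pi_iff)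
  define A where "A E = {x \<in> topspace X. mdist_set m E (f x) = 0}" for E
  have zero_set_A: "zero_set X (A E)" if "E \<subseteq> D" "E \<noteq> {}" for E
  proof -
    have "continuous_map X euclideanreal (mdist_set m E \<circ> f)"
      using continuous_map_compose[OF f continuous_map_mdist_set] that D_sub by blast
    then show ?thesis
      unfolding A_def using zero_set_continuous_real by fastforce
  qed
  have countable_if_Lindelof: "countable E" if E: "E \<subseteq> D" "Lindelof_subset X (A E)" for E
  proof -
    have "E \<subseteq> D \<inter> f ` A E"
    proof
      fix d assume "d \<in> E"
      moreover obtain x where "x \<in> topspace X" "d = f x"
        using \<open>d \<in> E\<close> E(1) D(2) by blast
      ultimately show "d \<in> D \<inter> f ` A E"
        using E(1) D_sub mdist_set_eq_0[of d E m] unfolding A_def by blast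
    qed
    then show ?thesis
      using countable_mseparated_Int_image[OF f E(2) \<open>0 < r\<close> D(1)] countable_subset by blast
  qed
  have "A D1 \<inter> A D2 = {}"
    using mdist_set_mseparated_disjoint[OF D(1) \<open>0 < r\<close> D12(1-3) ne f_in]
    unfolding A_def by blast
  then have "Lindelof_subset X (A D1) \<or> Lindelof_subset X (A D2)"
    using I0 zero_set_A[OF D12(1) ne(1)] zero_set_A[OF D12(2) ne(2)] unfolding I0_def by blast
  then show False
    using countable_if_Lindelof D12 by blast
qed

lemma I0_imp_near_point_off_Lindelof:
  assumes I0: "I0 X" and nL: "\<not> Lindelof_space X"
    and f: "continuous_map X (mtopology_of m) f" and "0 < e"
  obtains p Z where "p \<in> mspace m" "Lindelof_subset X Z"
    "\<And>x. x \<in> topspace X - Z \<Longrightarrow> mdist m (f x) p < e"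
proof -
  have f_in: "f ` topspace X \<subseteq> mspace m"
    using continuous_map_image_subset_topspace[OF f] by simp
  obtain D where D: "D \<subseteq> f ` topspace X" "mseparated m e D"
    and dense: "\<And>y. y \<in> f ` topspace X \<Longrightarrow> \<exists>d\<in>D. mdist m y d < e"
    using maximal_mseparated_subset[OF f_in \<open>0 < e\<close>] by blast
  have "countable D"
    by (rule I0_mseparated_countable[OF I0 f \<open>0 < e\<close> D(2,1)])
  have "\<exists>c. constant_off_Lindelof X (\<lambda>x. mdist m (f x) d) c" if "d \<in> D" for d
  proof -
    have "continuous_map X euclideanreal (\<lambda>x. mdist m (f x) d)"
      using f that D(1) f_in by (intro continuous_map_mdist) auto
    then show ?thesis
      using I0_imp_EC_real[OF I0] EC_iff_constant_off_Lindelof[OF nL] by blast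
  qed
  then obtain c Z where Z: "\<And>d. d \<in> D \<Longrightarrow> Lindelof_subset X (Z d)"
    and c: "\<And>d x. d \<in> D \<Longrightarrow> x \<in> topspace X - Z d \<Longrightarrow> mdist m (f x) d = c d"
    unfolding constant_off_Lindelof_def by metis
  have "Lindelof_subset X (\<Union>d\<in>D. Z d)"
    using Lindelof_subset_UN[OF \<open>countable D\<close>] Z by blast
  then obtain x where x: "x \<in> topspace X" "x \<notin> (\<Union>d\<in>D. Z d)"
    using Lindelof_space_if_covered nL by blast
  then obtain d where d: "d \<in> D" "mdist m (f x) d < e"
    using dense by blast
  then have "c d < e"
    using c[of d x] x by auto
  show ?thesis
  proof (rule that)
    show "d \<in> mspace m"
      using d(1) D(1) f_in by blast
    show "Lindelof_subset X (Z d)"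
      using Z d(1) by blast
    show "mdist m (f x') d < e" if "x' \<in> topspace X - Z d" for x'
      using c[OF d(1) that] \<open>c d < e\<close> by simp
  qed
qed

lemma constant_off_Lindelof_if_near_points:
  assumes nL: "\<not> Lindelof_space X" and f_in: "f ` topspace X \<subseteq> mspace m"
    and p: "\<And>n. p n \<in> mspace m" and Z: "\<And>n. Lindelof_subset X (Z n)"
    and near: "\<And>n x. x \<in> topspace X - Z n \<Longrightarrow> mdist m (f x) (p n) < inverse (Suc n)"
  shows "\<exists>y. constant_off_Lindelof X f y"
proof -
  define W where "W = (\<Union>n. Z n)"
  have W: "Lindelof_subset X W"
    unfolding W_def using Z by (intro Lindelof_subset_UN) auto
  then obtain q where q: "q \<in> topspace X - W"
    using Lindelof_space_if_covered nL by blast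
  have "f x = f q" if x: "x \<in> topspace X - W" for x
  proof -
    have fxq: "f x \<in> mspace m" "f q \<in> mspace m"
      using x q f_in by auto
    have close: "mdist m (f x) (f q) < 2 * inverse (Suc n)" for n
    proof -
      have "mdist m (f x) (f q) \<le> mdist m (f x) (p n) + mdist m (f q) (p n)"
        using mdist_triangle[of "f x" m "p n" "f q"] mdist_commute[of m "p n" "f q"] fxq p[of n]
        by linarith
      also have "\<dots> < 2 * inverse (Suc n)"
        using near[of x n] near[of q n] x q unfolding W_def by auto
      finally show ?thesis .
    qed
    have "mdist m (f x) (f q) = 0"
    proof (rule ccontr)
      assume "mdist m (f x) (f q) \<noteq> 0"
      then have "0 < mdist m (f x) (f q) / 2"
        using mdist_nonneg[of m "f x" "f q"] by linarith
      then obtain n where "inverse (Suc n) < mdist m (f x) (f q) / 2"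
        using reals_Archimedean by blast
      then show False
        using close[of n] by linarith
    qed
    then show ?thesis
      using fxq by simp
  qed
  then show ?thesis
    unfolding constant_off_Lindelof_def using W by blast
qed

lemma I0_imp_EC_metric:
  assumes I0: "I0 X"
  shows "EC X (mtopology_of m)"
proof (cases "Lindelof_space X")
  case True
  then show ?thesis by (simp add: EC_def)
next
  case nL: False
  show ?thesis
    unfolding EC_iff_constant_off_Lindelof[OF nL]
  proof (intro allI impI)
    fix f assume f: "continuous_map X (mtopology_of m) f"
    have "\<exists>p Z. p \<in> mspace m \<and> Lindelof_subset X Z \<and>
        (\<forall>x \<in> topspace X - Z. mdist m (f x) p < inverse (Suc n))" for n
      by (rule I0_imp_near_point_off_Lindelof[OF I0 nL f, of "inverse (Suc n)"]) auto
    then obtain p Z where p: "\<And>n. p n \<in> mspace m" and Z: "\<And>n. Lindelof_subset X (Z n)"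
      and near: "\<And>n x. x \<in> topspace X - Z n \<Longrightarrow> mdist m (f x) (p n) < inverse (Suc n)"
      by metis
    have "f ` topspace X \<subseteq> mspace m"
      using continuous_map_image_subset_topspace[OF f] by simp
    then show "\<exists>y. constant_off_Lindelof X f y"
      by (rule constant_off_Lindelof_if_near_points[OF nL _ p Z near])
  qed
qed

theorem theorem3p3:
  fixes X :: "'a topology"
  assumes "Hausdorff_space X"
  shows "(EC X euclideanreal \<longrightarrow> (\<forall>m :: 'b metric. EC X (mtopology_of m)))
       \<and> ((\<forall>m :: real metric. EC X (mtopology_of m)) \<longrightarrow> EC X euclideanreal)
       \<and> (EC X euclideanreal \<longleftrightarrow> I0 X)
       \<and> (zero_sets_meet X \<longrightarrow> I0 X)
       \<and> (IC X \<longrightarrow> zero_sets_meet X)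
       \<and> (IC X \<longleftrightarrow> closed_sets_meet X)
       \<and> (completely_regular_space X \<longrightarrow> (I0 X \<longleftrightarrow> zero_sets_meet X))
       \<and> (normal_space X \<longrightarrow> (I0 X \<longleftrightarrow> IC X))"
proof (intro conjI impI allI)
  fix m :: "'b metric"
  assume "EC X euclideanreal"
  then show "EC X (mtopology_of m)"
    using EC_real_iff_I0 I0_imp_EC_metric by blast
next
  assume "\<forall>m :: real metric. EC X (mtopology_of m)"
  then show "EC X euclideanreal"
    using mtopology_of_euclidean by metis
next
  assume "IC X"
  then show "zero_sets_meet X"
    using IC_imp_I0 I0_iff_zero_sets_meet by blast
next
  assume "normal_space X"
  then show "I0 X \<longleftrightarrow> IC X"
    using normal_I0_imp_IC IC_imp_I0 by blast
qed (simp_all add: EC_real_iff_I0 I0_iff_zero_sets_meet IC_iff_closed_sets_meet)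

end
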